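(* Let $b\ge 0$ and $h\ge 2b+1$ be integers, let $H$ be a set of $h$ vertices, and fix $\beta>0$. Let $M^1$ and $M^2$ be any two transition matrices (as defined in the context). Then the product $M^1M^2$ has a column containing at least $b+1$ strictly positive entries.
   Context: A reduced graph on $H$ is a directed graph obtained from the complete directed graph (without self-loops) on $H$ by deleting, for each vertex, an arbitrary set of $b$ of its incoming edges. A transition matrix is an $h\times h$ row-stochastic matrix $M$ with nonnegative real entries, rows and columns indexed by $H$, for which there is a reduced graph $R$ on $H$ such that $M_{ij}\ge\beta$ whenever $j=i$ or $(j,i)$ is an edge of $R$. (This models one phase of $D$ iterations of the Relay-IABC protocol: honest node $i$'s new state is a weighted combination, with weights at least $\beta$, of its own state and the states of its in-neighbors in the reduced graph remaining after trimming.) *)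

theory Defs
  imports Complex_Main
begin

text \<open>Matrices with rows and columns indexed by the finite set H are modelled as
  functions of type 'a => 'a => real; only entries with indices in H matter.
  Edges of a directed graph are pairs (j, i) meaning j -> i.\<close>

definition reduced_graph :: "'a set \<Rightarrow> nat \<Rightarrow> ('a \<times> 'a) set \<Rightarrow> bool" where
  "reduced_graph H b R \<longleftrightarrow>
     R \<subseteq> {(j, i). j \<in> H \<and> i \<in> H \<and> j \<noteq> i} \<and>
     (\<forall>i\<in>H. card {j \<in> H. j \<noteq> i \<and> (j, i) \<notin> R} = b)"

definition transition_matrix :: "'a set \<Rightarrow> nat \<Rightarrow> real \<Rightarrow> ('a \<Rightarrow> 'a \<Rightarrow> real) \<Rightarrow> bool" where
  "transition_matrix H b \<beta> M \<longleftrightarrow>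
     (\<forall>i\<in>H. \<forall>j\<in>H. 0 \<le> M i j) \<and>
     (\<forall>i\<in>H. (\<Sum>j\<in>H. M i j) = 1) \<and>
     (\<exists>R. reduced_graph H b R \<and>
        (\<forall>i\<in>H. \<forall>j\<in>H. (j = i \<or> (j, i) \<in> R) \<longrightarrow> \<beta> \<le> M i j))"

definition mat_prod :: "'a set \<Rightarrow> ('a \<Rightarrow> 'a \<Rightarrow> real) \<Rightarrow> ('a \<Rightarrow> 'a \<Rightarrow> real) \<Rightarrow> 'a \<Rightarrow> 'a \<Rightarrow> real" where
  "mat_prod H A B i j = (\<Sum>k\<in>H. A i k * B k j)"

end

theory Submission
  imports Defs
begin

text \<open>Every row of a transition matrix has at least h - b entries of size at least \<beta>.
  Double counting these entries over the h rows gives h(h - b) > hb of them, so some column j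
  of M2 has at least b + 1 of them. For any row i, the at least h - b large entries of row i
  of M1 and the at least b + 1 large entries of column j of M2 must then share an index k,
  so (M1 M2) i j \<ge> \<beta> * \<beta> > 0: the whole column j of the product is positive.\<close>

lemma transition_matrix_card_row_ge:
  assumes "finite H" "transition_matrix H b \<beta> M" "i \<in> H"
  shows "card H \<le> card {j \<in> H. \<beta> \<le> M i j} + b"
proof -
  obtain R where R: "reduced_graph H b R"
    and large: "\<forall>i\<in>H. \<forall>j\<in>H. (j = i \<or> (j, i) \<in> R) \<longrightarrow> \<beta> \<le> M i j"
    using assms(2) unfolding transition_matrix_def by blast
  define D where "D = {j \<in> H. j \<noteq> i \<and> (j, i) \<notin> R}"
  have "card D = b" "D \<subseteq> H"
    using R assms(3) unfolding reduced_graph_def D_def by auto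
  then have "card (H - D) = card H - b"
    using assms(1) by (simp add: card_Diff_subset finite_subset)
  moreover have "H - D \<subseteq> {j \<in> H. \<beta> \<le> M i j}"
    using large assms(3) unfolding D_def by auto
  then have "card (H - D) \<le> card {j \<in> H. \<beta> \<le> M i j}"
    using assms(1) by (intro card_mono) auto
  ultimately show ?thesis by linarith
qed

lemma sum_card_columns_eq_sum_card_rows:
  assumes "finite I" "finite J"
  shows "(\<Sum>j\<in>J. card {i \<in> I. P i j}) = (\<Sum>i\<in>I. card {j \<in> J. P i j})"
proof -
  have "(\<Sum>j\<in>J. card {i \<in> I. P i j}) = (\<Sum>j\<in>J. \<Sum>i\<in>I. if P i j then 1 else 0)"
    using assms by (simp add: sum.If_cases Int_def)
  also have "\<dots> = (\<Sum>i\<in>I. \<Sum>j\<in>J. if P i j then 1 else 0)"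
    by (rule sum.swap)
  also have "\<dots> = (\<Sum>i\<in>I. card {j \<in> J. P i j})"
    using assms by (simp add: sum.If_cases Int_def)
  finally show ?thesis .
qed

lemma exists_column_card_gt:
  assumes "finite I" "finite J"
    and rows: "\<And>i. i \<in> I \<Longrightarrow> r \<le> card {j \<in> J. P i j}"
    and "card J * c < card I * r"
  shows "\<exists>j\<in>J. c < card {i \<in> I. P i j}"
proof (rule ccontr)
  assume "\<not> ?thesis"
  then have "(\<Sum>j\<in>J. card {i \<in> I. P i j}) \<le> (\<Sum>j\<in>J. c)"
    by (intro sum_mono) (simp add: not_less)
  moreover have "(\<Sum>i\<in>I. r) \<le> (\<Sum>i\<in>I. card {j \<in> J. P i j})"
    using rows by (rule sum_mono)
  ultimately show False
    using assms(4) sum_card_columns_eq_sum_card_rows[OF assms(1,2), of P] by (simp add: mult.commute)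
qed

lemma card_disjoint_subsets_le:
  assumes "finite H" "A \<subseteq> H" "C \<subseteq> H" "A \<inter> C = {}"
  shows "card A + card C \<le> card H"
proof -
  have "card A + card C = card (A \<union> C)"
    using assms by (simp add: card_Un_disjoint finite_subset)
  also have "\<dots> \<le> card H"
    using assms by (intro card_mono) auto
  finally show ?thesis .
qed

lemma mat_prod_pos:
  assumes "finite H" "i \<in> H" "j \<in> H" "k \<in> H"
    and "\<forall>k\<in>H. 0 \<le> A i k" "\<forall>k\<in>H. 0 \<le> B k j"
    and "0 < A i k" "0 < B k j"
  shows "0 < mat_prod H A B i j"
  unfolding mat_prod_def
  using assms by (intro sum_pos2[where i = k]) auto

theorem lemma2:
  fixes H :: "'a set" and b h :: nat and \<beta> :: real
    and M1 M2 :: "'a \<Rightarrow> 'a \<Rightarrow> real"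
  assumes "finite H" and "card H = h" and "h \<ge> 2 * b + 1"
    and "\<beta> > 0"
    and "transition_matrix H b \<beta> M1"
    and "transition_matrix H b \<beta> M2"
  shows "\<exists>j\<in>H. card {i \<in> H. mat_prod H M1 M2 i j > 0} \<ge> b + 1"
proof -
  have "h * b < h * (h - b)"
    using assms(3) by simp
  then obtain j where "j \<in> H" and column: "b < card {k \<in> H. \<beta> \<le> M2 k j}"
    using exists_column_card_gt[OF assms(1,1), of "h - b" "\<lambda>k j. \<beta> \<le> M2 k j" b]
      transition_matrix_card_row_ge[OF assms(1,6)] assms(2) by fastforce
  have "0 < mat_prod H M1 M2 i j" if "i \<in> H" for i
  proof -
    have "card H \<le> card {k \<in> H. \<beta> \<le> M1 i k} + b"
      using transition_matrix_card_row_ge[OF assms(1,5) \<open>i \<in> H\<close>] .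
    then obtain k where "k \<in> H" "\<beta> \<le> M1 i k" "\<beta> \<le> M2 k j"
      using card_disjoint_subsets_le[OF assms(1), of "{k \<in> H. \<beta> \<le> M1 i k}" "{k \<in> H. \<beta> \<le> M2 k j}"]
        column by fastforce
    moreover have "\<forall>k\<in>H. 0 \<le> M1 i k" "\<forall>k\<in>H. 0 \<le> M2 k j"
      using assms(5,6) \<open>i \<in> H\<close> \<open>j \<in> H\<close> unfolding transition_matrix_def by auto
    ultimately show ?thesis
      using mat_prod_pos[OF assms(1) \<open>i \<in> H\<close> \<open>j \<in> H\<close>] assms(4) by auto
  qed
  then have "{i \<in> H. mat_prod H M1 M2 i j > 0} = H" by auto
  then have "b + 1 \<le> card {i \<in> H. mat_prod H M1 M2 i j > 0}"
    using assms(2,3) by simp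
  then show ?thesis
    using \<open>j \<in> H\<close> by blast
qed

end
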